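(* For any distribution $\mathcal D$ and $k\in\mathbb N$, let $x_1,\dots,x_k$ be i.i.d. draws from $\mathcal D$ and let $e$ be any event (defined on a probability space jointly with the draw of $x_1,\dots,x_k$) that occurs with probability $\delta>0$. Let $\mathcal D_e$ be the distribution of $x_i$, where $i$ is uniform in $\{1,\dots,k\}$ independently, conditioned on the event $e$ occurring. Then $$d_{\mathrm{TV}}(\mathcal D,\mathcal D_e)\le\sqrt{\frac{\ln(1/\delta)}{2k}}.$$
   Context: $d_{\mathrm{TV}}$ denotes total variation distance: $d_{\mathrm{TV}}(\mathcal P,\mathcal Q)=\sup_{T:\Omega\to[0,1]}\{\mathbb E_{\mathcal P}[T]-\mathbb E_{\mathcal Q}[T]\}$. *)

theory Defs
  imports "HOL-Probability.Probability"
begin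

definition dTV :: "'a measure \<Rightarrow> 'a measure \<Rightarrow> real" where
  "dTV P Q = (SUP T \<in> {T \<in> borel_measurable P. \<forall>x\<in>space P. 0 \<le> T x \<and> T x \<le> 1}.
                (\<integral>x. T x \<partial>P) - (\<integral>x. T x \<partial>Q))"

text \<open>The distribution D_e: draw omega from M (carrying the samples X 1, ..., X k and the
  event E), draw i uniformly from {1..k} independently, condition the joint space on the
  event E, and take the law of X i omega.\<close>
definition cond_draw_dist ::
  "'w measure \<Rightarrow> 'a measure \<Rightarrow> (nat \<Rightarrow> 'w \<Rightarrow> 'a) \<Rightarrow> nat \<Rightarrow> 'w set \<Rightarrow> 'a measure" where
  "cond_draw_dist M D X k E =
     distr (uniform_measure (M \<Otimes>\<^sub>M uniform_count_measure {1..k}) (E \<times> {1..k}))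
           D (\<lambda>(\<omega>, i). X i \<omega>)"

end

theory Submission
  imports Defs
begin

text \<open>Fix a test function \<open>T\<close> with values in [0,1], let \<open>\<mu>\<close> be its mean under \<open>D\<close> and
  \<open>Y = \<Sum>\<^sub>i (\<mu> - T(X\<^sub>i))\<close>. Averaging over the uniform index shows that the gap
  \<open>E\<^sub>D[T] - E\<^sub>D\<^sub>e[T]\<close> is \<open>E[1\<^sub>e Y] / (\<delta> k)\<close>. Hoeffding's lemma and independence give
  \<open>E[exp(s Y)] \<le> exp(s\<^sup>2 k / 8)\<close>, and the change-of-measure inequality
  \<open>E[1\<^sub>e Z] \<le> \<delta> (ln E[exp Z] + ln(1/\<delta>))\<close> turns this into a bound on \<open>E[1\<^sub>e Y]\<close> for every
  \<open>s > 0\<close>; the choice \<open>s = 4 \<cdot> gap\<close> yields \<open>gap\<^sup>2 \<le> ln(1/\<delta>) / (2k)\<close>.\<close>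

lemma dTV_le:
  assumes "\<And>T. T \<in> borel_measurable P \<Longrightarrow> \<forall>x\<in>space P. 0 \<le> T x \<and> T x \<le> 1 \<Longrightarrow>
             (\<integral>x. T x \<partial>P) - (\<integral>x. T x \<partial>Q) \<le> b"
  shows "dTV P Q \<le> b"
  unfolding dTV_def by (rule cSUP_least) (use assms in \<open>auto intro!: exI[of _ "\<lambda>_. 0"]\<close>)

lemma integral_uniform_measure:
  fixes f :: "'a \<Rightarrow> real"
  assumes A: "A \<in> sets M" "emeasure M A \<noteq> 0" "emeasure M A \<noteq> \<infinity>"
    and f: "f \<in> borel_measurable M"
  shows "(\<integral>x. f x \<partial>uniform_measure M A) = (\<integral>x. indicator A x * f x \<partial>M) / measure M A"
proof -
  have "measure M A > 0"
    using A by (simp add: emeasure_eq_ennreal_measure zero_less_measure_iff)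
  then have "1 / emeasure M A = ennreal (1 / measure M A)"
    using A divide_ennreal[of 1 "measure M A"] by (simp add: emeasure_eq_ennreal_measure)
  then have density: "(\<lambda>x. indicator A x / emeasure M A) = (\<lambda>x. ennreal (indicator A x / measure M A))"
    by (auto simp: fun_eq_iff indicator_def)
  have "(\<integral>x. f x \<partial>uniform_measure M A) = (\<integral>x. (indicator A x / measure M A) * f x \<partial>M)"
    unfolding uniform_measure_def density using A f by (subst integral_density) auto
  also have "\<dots> = (\<integral>x. indicator A x * f x \<partial>M) / measure M A"
    by (simp flip: integral_divide_zero)
  finally show ?thesis .
qed

lemma measurable_case_prod_index:
  assumes "countable I" "sets N = sets (count_space I)"
    and "\<And>i. i \<in> I \<Longrightarrow> X i \<in> measurable M D"
  shows "(\<lambda>(x, i). X i x) \<in> measurable (M \<Otimes>\<^sub>M N) D"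
proof -
  have "(\<lambda>p. X (snd p) (fst p)) \<in> measurable (M \<Otimes>\<^sub>M N) D"
  proof (rule measurable_compose_countable'[where I=I])
    show "snd \<in> measurable (M \<Otimes>\<^sub>M N) (count_space I)"
      using measurable_snd[of M N] by (simp add: measurable_cong_sets[OF refl assms(2)])
  qed (use assms in auto)
  then show ?thesis
    by (simp add: case_prod_beta)
qed

lemma integral_cond_draw_dist:
  fixes T :: "'a \<Rightarrow> real"
  assumes "prob_space M" "k \<ge> 1"
    and X: "\<And>i. i \<in> {1..k} \<Longrightarrow> X i \<in> measurable M D"
    and T[measurable]: "T \<in> borel_measurable D"
    and T_bounded: "\<And>x. x \<in> space D \<Longrightarrow> \<bar>T x\<bar> \<le> B"
    and E[measurable]: "E \<in> sets M" "measure M E > 0"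
  shows "(\<integral>x. T x \<partial>cond_draw_dist M D X k E)
           = (\<integral>\<omega>. indicator E \<omega> * (\<Sum>i=1..k. T (X i \<omega>)) \<partial>M) / (measure M E * k)"
proof -
  interpret M: prob_space M by fact
  define K where "K = {1..k}"
  define U where "U = uniform_count_measure K"
  have K: "finite K" "K \<noteq> {}" "card K = k"
    using \<open>k \<ge> 1\<close> by (auto simp: K_def)
  interpret U: prob_space U
    unfolding U_def using K by (intro prob_space_uniform_count_measure)
  interpret MU: pair_prob_space M U ..
  have [measurable]: "(\<lambda>(\<omega>, i). X i \<omega>) \<in> measurable (M \<Otimes>\<^sub>M U) D"
    unfolding U_def using X K
    by (intro measurable_case_prod_index[where I=K])
       (auto simp: K_def countable_finite sets_uniform_count_measure_count_space)
  have [measurable]: "E \<times> K \<in> sets (M \<Otimes>\<^sub>M U)"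
    by (auto simp: U_def sets_uniform_count_measure)
  have emeasure_EK: "emeasure (M \<Otimes>\<^sub>M U) (E \<times> K) = measure M E"
    using U.emeasure_pair_measure_Times[of E M K] K \<open>k \<ge> 1\<close>
    by (simp add: U_def emeasure_uniform_count_measure sets_uniform_count_measure M.emeasure_eq_measure)
  define g where "g = (\<lambda>p. indicator (E \<times> K) p * T (X (snd p) (fst p)))"
  have "integrable (M \<Otimes>\<^sub>M U) g"
  proof (rule MU.integrable_const_bound[where B="\<bar>B\<bar>"])
    have "\<bar>T (X i \<omega>)\<bar> \<le> \<bar>B\<bar>" if "i \<in> K" "\<omega> \<in> space M" for i \<omega>
    proof -
      have "X i \<omega> \<in> space D"
        using measurable_space[OF X[of i]] that by (simp add: K_def)
      then show ?thesis
        using T_bounded abs_ge_self order_trans by blast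
    qed
    then show "AE p in M \<Otimes>\<^sub>M U. norm (g p) \<le> \<bar>B\<bar>"
      by (intro AE_I2) (auto simp: g_def space_pair_measure split: split_indicator)
  qed (simp add: g_def)
  have "(\<integral>x. T x \<partial>cond_draw_dist M D X k E)
      = (\<integral>p. T (X (snd p) (fst p)) \<partial>uniform_measure (M \<Otimes>\<^sub>M U) (E \<times> K))"
    unfolding cond_draw_dist_def K_def[symmetric] U_def[symmetric]
    by (subst integral_distr) (simp_all add: case_prod_beta)
  also have "\<dots> = (\<integral>p. g p \<partial>(M \<Otimes>\<^sub>M U)) / measure M E"
    unfolding g_def using E emeasure_EK
    by (subst integral_uniform_measure) (simp_all add: measure_def)
  also have "(\<integral>p. g p \<partial>(M \<Otimes>\<^sub>M U)) = (\<integral>\<omega>. (\<integral>i. g (\<omega>, i) \<partial>U) \<partial>M)"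
    using \<open>integrable (M \<Otimes>\<^sub>M U) g\<close> by (rule MU.integral_fst'[symmetric])
  also have "\<dots> = (\<integral>\<omega>. indicator E \<omega> * (\<Sum>i\<in>K. T (X i \<omega>)) / k \<partial>M)"
    by (intro Bochner_Integration.integral_cong refl)
       (simp add: U_def integral_uniform_count_measure K g_def indicator_def sum_distrib_left)
  finally show ?thesis
    by (simp add: K_def field_simps)
qed

lemma (in indep_interval_bounded_random_variables) Hoeffdings_lemma_sum:
  assumes "l > 0"
  shows "expectation (\<lambda>x. exp (l * (\<Sum>i\<in>I. X i x - expectation (X i))))
           \<le> exp (l\<^sup>2 * (\<Sum>i\<in>I. (b i - a i)\<^sup>2) / 8)"
proof -
  have "(\<integral>\<^sup>+x. exp (l * (\<Sum>i\<in>I. X i x - expectation (X i))) \<partial>M)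
      = (\<integral>\<^sup>+x. (\<Prod>i\<in>I. ennreal (exp (l * (X i x - expectation (X i))))) \<partial>M)"
    by (intro nn_integral_cong) (simp add: sum_distrib_left exp_sum fin prod_ennreal)
  also have "\<dots> = (\<Prod>i\<in>I. \<integral>\<^sup>+x. ennreal (exp (l * (X i x - expectation (X i)))) \<partial>M)"
    by (intro indep_vars_nn_integral fin indep_vars_compose2[OF indep]) auto
  also have "\<dots> \<le> (\<Prod>i\<in>I. ennreal (exp (l\<^sup>2 * (b i - a i)\<^sup>2 / 8)))"
  proof (intro prod_mono_ennreal)
    fix i assume "i \<in> I"
    then interpret interval_bounded_random_variable M "X i" "a i" "b i" ..
    show "(\<integral>\<^sup>+x. ennreal (exp (l * (X i x - expectation (X i)))) \<partial>M)
            \<le> ennreal (exp (l\<^sup>2 * (b i - a i)\<^sup>2 / 8))"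
      by (rule Hoeffdings_lemma_nn_integral) fact
  qed
  also have "\<dots> = ennreal (exp (l\<^sup>2 * (\<Sum>i\<in>I. (b i - a i)\<^sup>2) / 8))"
    by (simp add: prod_ennreal exp_sum fin sum_distrib_left sum_divide_distrib)
  finally show ?thesis
    by (subst integral_eq_nn_integral) (auto intro: enn2real_leI)
qed

lemma (in prob_space) expectation_exp_sum_deviation_le:
  fixes s \<mu> :: real
  assumes "finite K" and indep: "indep_vars (\<lambda>_. D) X K"
    and T[measurable]: "T \<in> borel_measurable D"
    and T01: "\<And>x. x \<in> space D \<Longrightarrow> 0 \<le> T x \<and> T x \<le> 1"
    and mean: "\<And>i. i \<in> K \<Longrightarrow> expectation (\<lambda>\<omega>. T (X i \<omega>)) = \<mu>"
    and "s > 0"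
  shows "expectation (\<lambda>\<omega>. exp (s * (\<Sum>i\<in>K. \<mu> - T (X i \<omega>)))) \<le> exp (s\<^sup>2 * card K / 8)"
proof -
  interpret indep_interval_bounded_random_variables M K "\<lambda>i \<omega>. - T (X i \<omega>)" "\<lambda>_. -1" "\<lambda>_. 0"
  proof
    show "indep_vars (\<lambda>_. borel) (\<lambda>i \<omega>. - T (X i \<omega>)) K"
      using indep_vars_compose2[OF indep, of "\<lambda>_ x. - T x"] by simp
    show "AE \<omega> in M. - T (X i \<omega>) \<in> {-1..0}" if "i \<in> K" for i
      using indep that T01 by (intro AE_I2) (auto simp: indep_vars_def dest: measurable_space)
  qed fact
  show ?thesis
    using Hoeffdings_lemma_sum[OF \<open>s > 0\<close>] mean by simp
qed

text \<open>Event form of the Donsker--Varadhan change-of-measure inequality: integrate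
  \<open>exp c \<cdot> (1 + Z - c) \<le> exp Z\<close> over \<open>E\<close>, where \<open>c\<close> is the conditional mean of \<open>Z\<close> given \<open>E\<close>.\<close>
lemma (in prob_space) integral_indicator_le_of_mgf_le:
  assumes E: "E \<in> events" "prob E > 0"
    and Z: "integrable M Z" "integrable M (\<lambda>x. exp (Z x))"
    and mgf: "expectation (\<lambda>x. exp (Z x)) \<le> exp a"
  shows "(\<integral>x. indicator E x * Z x \<partial>M) \<le> prob E * (a + ln (1 / prob E))"
proof -
  define c where "c = (\<integral>x. indicator E x * Z x \<partial>M) / prob E"
  have int_EZ: "integrable M (\<lambda>x. indicator E x * Z x)"
    using integrable_mult_indicator[OF E(1) Z(1)] by simp
  have int_E: "integrable M (\<lambda>x. indicator E x :: real)"
    using E(1) by (simp add: integrable_indicator_iff less_top[symmetric])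
  have "(\<integral>x. exp c * (indicator E x + indicator E x * Z x - c * indicator E x) \<partial>M)
      = exp c * (prob E + c * prob E - c * prob E)"
    using int_EZ int_E E by (simp add: c_def)
  then have "exp c * prob E
      = (\<integral>x. exp c * (indicator E x + indicator E x * Z x - c * indicator E x) \<partial>M)"
    by simp
  also have "\<dots> \<le> expectation (\<lambda>x. exp (Z x))"
  proof (rule integral_mono)
    show "integrable M (\<lambda>x. exp c * (indicator E x + indicator E x * Z x - c * indicator E x))"
      using int_EZ int_E by simp
    fix x
    have "1 + (Z x - c) \<le> exp (Z x - c)"
      by (rule exp_ge_add_one_self)
    then have "exp c * (1 + Z x - c) \<le> exp (Z x)"
      by (simp add: exp_diff field_simps)
    then show "exp c * (indicator E x + indicator E x * Z x - c * indicator E x) \<le> exp (Z x)"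
      by (simp add: indicator_def algebra_simps)
  qed (fact Z(2))
  also note mgf
  finally have "exp (c + ln (prob E)) \<le> exp a"
    using E(2) by (simp add: exp_add)
  then have "c + ln (prob E) \<le> a"
    by simp
  then show ?thesis
    using E(2) by (simp add: c_def ln_div field_simps)
qed

lemma le_sqrt_of_linear_le_quadratic:
  fixes g a L :: real
  assumes bound: "\<And>s. s > 0 \<Longrightarrow> s * g \<le> s\<^sup>2 * a / 8 + L" and "a > 0" "L \<ge> 0"
  shows "g / a \<le> sqrt (L / (2 * a))"
proof (cases "g > 0")
  case True
  have "4 * g\<^sup>2 / a \<le> 2 * g\<^sup>2 / a + L"
    using bound[of "4 * g / a"] True \<open>a > 0\<close> by (simp add: power2_eq_square field_simps)
  then have "(g / a)\<^sup>2 \<le> L / (2 * a)"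
    using \<open>a > 0\<close> by (simp add: power2_eq_square field_simps)
  then show ?thesis
    by (rule real_le_rsqrt)
next
  case False
  then have "g / a \<le> 0"
    using \<open>a > 0\<close> by (intro divide_nonpos_pos) auto
  also have "0 \<le> sqrt (L / (2 * a))"
    using \<open>a > 0\<close> \<open>L \<ge> 0\<close> by simp
  finally show ?thesis .
qed

lemma test_function_gap_cond_draw_dist_le:
  assumes "prob_space M" "k \<ge> 1"
    and X: "\<And>i. i \<in> {1..k} \<Longrightarrow> X i \<in> measurable M D"
    and law: "\<And>i. i \<in> {1..k} \<Longrightarrow> distr M D (X i) = D"
    and indep: "prob_space.indep_vars M (\<lambda>_. D) X {1..k}"
    and E: "E \<in> sets M" "measure M E > 0"
    and T[measurable]: "T \<in> borel_measurable D"
    and T01: "\<And>x. x \<in> space D \<Longrightarrow> 0 \<le> T x \<and> T x \<le> 1"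
  shows "(\<integral>x. T x \<partial>D) - (\<integral>x. T x \<partial>cond_draw_dist M D X k E)
           \<le> sqrt (ln (1 / measure M E) / (2 * real k))"
proof -
  interpret M: prob_space M by fact
  define \<delta> where "\<delta> = measure M E"
  define \<mu> where "\<mu> = (\<integral>x. T x \<partial>D)"
  define Y where "Y = (\<lambda>\<omega>. \<Sum>i=1..k. \<mu> - T (X i \<omega>))"
  define I where "I = (\<integral>\<omega>. indicator E \<omega> * Y \<omega> \<partial>M)"
  have \<delta>: "\<delta> > 0"
    using E by (simp add: \<delta>_def)
  have Y[measurable]: "Y \<in> borel_measurable M"
    unfolding Y_def using X by (intro borel_measurable_sum borel_measurable_diff) auto
  have Y_bounded: "\<bar>Y \<omega>\<bar> \<le> k * (\<bar>\<mu>\<bar> + 1)" if "\<omega> \<in> space M" for \<omega>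
  proof -
    have "\<bar>Y \<omega>\<bar> \<le> (\<Sum>i=1..k. \<bar>\<mu> - T (X i \<omega>)\<bar>)"
      unfolding Y_def by (rule sum_abs)
    also have "\<dots> \<le> (\<Sum>i=1..k. \<bar>\<mu>\<bar> + 1)"
      by (intro sum_mono) (use T01 measurable_space[OF X] that in force)
    finally show ?thesis
      by simp
  qed
  have integrable_Y: "integrable M (\<lambda>\<omega>. s * Y \<omega>)" for s
    using Y_bounded by (intro M.integrable_const_bound[where B="\<bar>s\<bar> * (k * (\<bar>\<mu>\<bar> + 1))"])
      (auto intro!: AE_I2 mult_left_mono simp: abs_mult)
  have "(\<integral>\<omega>. indicator E \<omega> * (\<Sum>i=1..k. T (X i \<omega>)) \<partial>M)
      = (\<integral>\<omega>. k * \<mu> * indicator E \<omega> - indicator E \<omega> * Y \<omega> \<partial>M)"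
    by (intro Bochner_Integration.integral_cong) (simp_all add: Y_def sum_subtractf algebra_simps)
  also have "\<dots> = k * \<mu> * \<delta> - I"
    using integrable_mult_indicator[OF E(1) integrable_Y[of 1]] E(1)
    by (simp add: I_def \<delta>_def integrable_indicator_iff less_top[symmetric])
  finally have gap: "\<mu> - (\<integral>x. T x \<partial>cond_draw_dist M D X k E) = I / \<delta> / k"
    using integral_cond_draw_dist[OF \<open>prob_space M\<close> \<open>k \<ge> 1\<close> X T _ E, where B=1] T01 \<delta> \<open>k \<ge> 1\<close>
    by (simp add: \<delta>_def field_simps)
  have "s * (I / \<delta>) \<le> s\<^sup>2 * k / 8 + ln (1 / \<delta>)" if "s > 0" for s
  proof -
    have "M.expectation (\<lambda>\<omega>. exp (s * Y \<omega>)) \<le> exp (s\<^sup>2 * k / 8)"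
      using M.expectation_exp_sum_deviation_le[OF _ indep T T01 _ \<open>s > 0\<close>, of \<mu>]
        integral_distr[OF X T] law by (simp add: Y_def \<mu>_def)
    moreover have "integrable M (\<lambda>\<omega>. exp (s * Y \<omega>))"
      using Y_bounded \<open>s > 0\<close>
      by (intro M.integrable_const_bound[where B="exp (s * (k * (\<bar>\<mu>\<bar> + 1)))"])
         (auto intro!: AE_I2 mult_left_mono simp: abs_le_iff)
    ultimately have "(\<integral>\<omega>. indicator E \<omega> * (s * Y \<omega>) \<partial>M) \<le> \<delta> * (s\<^sup>2 * k / 8 + ln (1 / \<delta>))"
      unfolding \<delta>_def using E integrable_Y by (intro M.integral_indicator_le_of_mgf_le) auto
    then show ?thesis
      using \<delta> by (simp add: I_def field_simps)
  qed
  then have "I / \<delta> / k \<le> sqrt (ln (1 / \<delta>) / (2 * real k))"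
    using \<delta> \<open>k \<ge> 1\<close> E by (intro le_sqrt_of_linear_le_quadratic) (auto simp: \<delta>_def)
  then show ?thesis
    using gap by (simp add: \<mu>_def \<delta>_def)
qed

theorem proposition5p4:
  fixes M :: "'w measure" and D :: "'a measure" and X :: "nat \<Rightarrow> 'w \<Rightarrow> 'a"
    and E :: "'w set" and k :: nat
  assumes "prob_space M" and "prob_space D" and "k \<ge> 1"
    and "\<forall>i\<in>{1..k}. X i \<in> measurable M D"
    and "\<forall>i\<in>{1..k}. distr M D (X i) = D"
    and "prob_space.indep_vars M (\<lambda>_. D) X {1..k}"
    and "E \<in> sets M" and "measure M E > 0"
  shows "dTV D (cond_draw_dist M D X k E) \<le> sqrt (ln (1 / measure M E) / (2 * real k))"
  using assms by (intro dTV_le test_function_gap_cond_draw_dist_le) auto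

end
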